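(* Let $k\in\mathbb{N}$, $R>0$, $S^k=\{y\in\mathbb{R}^{k+1}:|y|=R\}$, and fix $x\in\mathbb{R}^{k+1}$ with $|x|\neq R$. Then for every $\beta\in\mathbb{C}$ there are infinitely many $\alpha\in\mathbb{C}$ such that $$\int_{S^k}\omega(x,y)^\alpha\,dS_y=\int_{S^k}\omega(x,y)^\beta\,dS_y .$$
   Context: For $x\neq y$ in $\mathbb{R}^{k+1}$, $\omega(x,y)=\left|\dfrac{|x|^2-|y|^2}{|x-y|^2}\right|$. $dS_y$ is the surface measure on $S^k$. For $|x|\neq R$ and $y\in S^k$, $\omega(x,y)>0$ and $\omega^\alpha=e^{\alpha\ln\omega}$. *)

theory Defs
  imports "HOL-Analysis.Analysis"
begin

definition omega :: "'a::euclidean_space \<Rightarrow> 'a \<Rightarrow> real" where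
  "omega x y = \<bar>(norm x ^ 2 - norm y ^ 2) / (norm (x - y) ^ 2)\<bar>"

definition cpow_pos :: "real \<Rightarrow> complex \<Rightarrow> complex" where
  "cpow_pos w a = exp (a * complex_of_real (ln w))"

text \<open>Surface measure on the sphere of radius R in a Euclidean space of dimension n,
  via the cone construction: sigma(A) = (n/R) * lebesgue{t y : 0 < t \<le> 1, y \<in> A},
  realised as the push-forward of Lebesgue measure on the punctured ball under
  radial projection y \<mapsto> R y / |y|, scaled by n/R. For n = 1 this is counting
  measure on {-R, R}.\<close>
definition sphere_measure :: "real \<Rightarrow> ('a::euclidean_space) measure" where
  "sphere_measure R =
     scale_measure (ennreal (real DIM('a) / R))
       (distr (restrict_space lborel (ball 0 R - {0})) borel (\<lambda>y. (R / norm y) *\<^sub>R y))"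

end

theory Submission
  imports Defs "HOL-Complex_Analysis.Complex_Analysis"
begin

text \<open>With \<open>l = ln \<omega>(x, \<cdot>)\<close>, which is bounded on the sphere because \<open>|x| \<noteq> R\<close>, the integral
  \<open>F \<alpha> = \<integral> exp (\<alpha> l) dS\<close> is an entire function of exponential type, and it is bounded on the
  imaginary axis, where \<open>|exp (\<alpha> l)| = 1\<close>. If \<open>F - F \<beta>\<close> had only finitely many zeros, then
  (Hadamard, in the elementary form obtained from the Borel--Carath\'eodory inequality for a
  logarithm of the zero-free quotient) \<open>F - F \<beta> = P \<cdot> exp (a \<alpha> + b)\<close> with a polynomial \<open>P\<close>
  vanishing at \<open>\<beta>\<close>. On a suitable half of the imaginary axis \<open>|exp (a \<alpha> + b)| \<ge> exp (Re b)\<close>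
  while \<open>|P| \<rightarrow> \<infinity>\<close>, contradicting boundedness.\<close>

lemma norm_less_norm_reflection_of_Re_less:
  fixes w :: complex
  assumes "Re w < T" "T > 0"
  shows "norm w < norm (2 * of_real T - w)"
proof -
  have "(norm w)\<^sup>2 < (norm (2 * of_real T - w))\<^sup>2"
    using assms unfolding cmod_power2 by (simp add: power2_eq_square algebra_simps)
  then show ?thesis by (simp add: power2_less_imp_less)
qed

text \<open>The Cayley-type map \<open>f / (2T - f)\<close> sends the half-plane \<open>Re < T\<close> into the unit disc,
  so the Schwarz lemma applies to it.\<close>
lemma Borel_Caratheodory_half_radius:
  fixes f :: "complex \<Rightarrow> complex"
  assumes hol: "f holomorphic_on ball 0 r" and f0: "f 0 = 0"
    and Re_less: "\<And>z. norm z < r \<Longrightarrow> Re (f z) < T"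
    and r: "r > 0" and \<xi>: "norm \<xi> \<le> r / 2"
  shows "norm (f \<xi>) \<le> 2 * T"
proof -
  have T: "T > 0" using Re_less[of 0] f0 r by simp
  define g where "g z = f (of_real r * z)" for z
  have Re_g: "Re (g z) < T" if "norm z < 1" for z
    unfolding g_def using that r by (intro Re_less) (simp add: norm_mult)
  have den: "2 * of_real T - g z \<noteq> 0" if "norm z < 1" for z
    using Re_g[OF that] T by (auto simp: algebra_simps complex_eq_iff)
  define \<phi> where "\<phi> z = g z / (2 * of_real T - g z)" for z
  have "g holomorphic_on ball 0 1"
    unfolding g_def using r
    by (intro holomorphic_on_compose_gen[OF _ hol, unfolded o_def] holomorphic_intros)
       (auto simp: norm_mult)
  then have "\<phi> holomorphic_on ball 0 1"
    unfolding \<phi>_def using den by (intro holomorphic_intros) auto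
  moreover have "\<phi> 0 = 0" unfolding \<phi>_def g_def by (simp add: f0)
  moreover have "norm (\<phi> z) < 1" if "norm z < 1" for z
    using norm_less_norm_reflection_of_Re_less[OF Re_g[OF that] T] den[OF that]
    unfolding \<phi>_def by (simp add: norm_divide divide_less_eq)
  moreover have z0: "norm (\<xi> / of_real r) \<le> 1 / 2" "norm (\<xi> / of_real r) < 1"
    using \<xi> r by (auto simp: norm_divide divide_le_eq)
  ultimately have "norm (\<phi> (\<xi> / of_real r)) \<le> 1 / 2"
    using Schwarz_Lemma(1)[of \<phi>] by fastforce
  moreover have g\<xi>: "g (\<xi> / of_real r) = f \<xi>" unfolding g_def using r by simp
  moreover have "2 * of_real T - f \<xi> \<noteq> 0" using den[OF z0(2)] g\<xi> by simp
  ultimately have "norm (f \<xi>) \<le> 1 / 2 * norm (2 * of_real T - f \<xi>)"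
    unfolding \<phi>_def by (simp add: norm_divide divide_le_eq)
  also have "\<dots> \<le> 1 / 2 * (2 * T + norm (f \<xi>))"
    using norm_triangle_ineq4[of "2 * of_real T" "f \<xi>"] T by (simp add: norm_mult)
  finally show ?thesis by simp
qed

lemma entire_affine_if_Re_le_linear:
  fixes u :: "complex \<Rightarrow> complex"
  assumes hol: "u holomorphic_on UNIV" and Re_le: "\<And>z. Re (u z) \<le> A * norm z + B" and A: "A \<ge> 0"
  obtains a b where "\<And>z. u z = a * z + b"
proof -
  define v where "v z = u z - u 0" for z
  define B' where "B' = \<bar>B\<bar> + norm (u 0)"
  have B': "B' \<ge> 0" unfolding B'_def by simp
  have hol_v: "v holomorphic_on UNIV" unfolding v_def by (intro holomorphic_intros hol)
  have Re_v: "Re (v z) \<le> A * norm z + B'" for z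
    using Re_le[of z] abs_Re_le_cmod[of "u 0"] unfolding v_def B'_def by auto
  have bound: "norm (v \<xi>) \<le> 2 * (A * (2 * norm \<xi> + 2) + B' + 1)" for \<xi>
  proof (rule Borel_Caratheodory_half_radius[of v "2 * norm \<xi> + 2"])
    show "v holomorphic_on ball 0 (2 * norm \<xi> + 2)" using hol_v by (rule holomorphic_on_subset) auto
    show "Re (v z) < A * (2 * norm \<xi> + 2) + B' + 1" if "norm z < 2 * norm \<xi> + 2" for z
      using Re_v[of z] mult_left_mono[OF less_imp_le[OF that] A] by linarith
  qed (auto simp: v_def add_nonneg_pos)
  have "v \<xi> = (\<Sum>k\<le>1. (deriv ^^ k) v 0 / fact k * \<xi> ^ k)" for \<xi>
  proof (rule Liouville_polynomial[OF hol_v, of 1 "8 * A + 2 * B' + 2"])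
    fix z :: complex assume z: "1 \<le> norm z"
    have "4 * A + 2 * B' + 2 \<le> (4 * A + 2 * B' + 2) * norm z"
      using mult_left_mono[OF z, of "4 * A + 2 * B' + 2"] A B' by simp
    moreover have "2 * (A * (2 * norm z + 2) + B' + 1) = 4 * A * norm z + (4 * A + 2 * B' + 2)"
      by (simp add: algebra_simps)
    moreover have "(8 * A + 2 * B' + 2) * norm z ^ 1 = 4 * A * norm z + (4 * A + 2 * B' + 2) * norm z"
      by (simp add: algebra_simps)
    ultimately show "norm (v z) \<le> (8 * A + 2 * B' + 2) * norm z ^ 1"
      using bound[of z] by linarith
  qed
  then have "u z - u 0 = deriv v 0 * z" for z
    by (simp add: atMost_Suc v_def)
  then have "u z = deriv v 0 * z + u 0" for z
    by (metis diff_eq_eq)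
  then show thesis by (rule that)
qed

lemma entire_factor_out_zero:
  fixes f :: "complex \<Rightarrow> complex"
  assumes hol: "f holomorphic_on UNIV" and fz: "f z = 0" and w0: "f w0 \<noteq> 0"
  obtains k g where "k > 0" "g holomorphic_on UNIV" "g z \<noteq> 0" "\<And>w. f w = (w - z) ^ k * g w"
proof -
  define k where "k = nat (zorder f z)"
  define g0 where "g0 = zor_poly f z"
  have "zorder f z > 0 \<and> (\<exists>r. r > 0 \<and> cball z r \<subseteq> UNIV \<and> g0 holomorphic_on cball z r
          \<and> (\<forall>w\<in>cball z r. f w = g0 w * (w - z) ^ k \<and> g0 w \<noteq> 0))"
    using zorder_exist_zero[OF hol, of z] fz w0 unfolding k_def g0_def by auto
  then obtain r where k: "k > 0" and r: "r > 0" "g0 holomorphic_on cball z r"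
    and g0: "\<And>w. w \<in> cball z r \<Longrightarrow> f w = g0 w * (w - z) ^ k \<and> g0 w \<noteq> 0"
    unfolding k_def by auto
  define g where "g w = (if w = z then g0 z else f w / (w - z) ^ k)" for w
  have "g holomorphic_on ball z r"
    by (rule holomorphic_transform[of g0], rule holomorphic_on_subset[OF r(2)])
       (use g0 in \<open>auto simp: g_def\<close>)
  moreover have "g holomorphic_on UNIV - {z}"
    by (rule holomorphic_transform[of "\<lambda>w. f w / (w - z) ^ k"])
       (auto simp: g_def intro!: holomorphic_intros holomorphic_on_subset[OF hol])
  ultimately have "g holomorphic_on ball z r \<union> (UNIV - {z})"
    by (rule holomorphic_on_Un) auto
  moreover have "ball z r \<union> (UNIV - {z}) = UNIV" using r(1) by auto
  ultimately have "g holomorphic_on UNIV" by simp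
  moreover have "g z \<noteq> 0" using g0[of z] r(1) by (simp add: g_def)
  moreover have "f w = (w - z) ^ k * g w" for w
    using fz k by (simp add: g_def)
  ultimately show thesis using k that by blast
qed

lemma entire_factor_finite_zeros:
  fixes f :: "complex \<Rightarrow> complex"
  assumes "finite Z" "f holomorphic_on UNIV" "\<And>w. f w = 0 \<Longrightarrow> w \<in> Z" "f w0 \<noteq> 0"
  shows "\<exists>n q. q holomorphic_on UNIV \<and> (\<forall>w. q w \<noteq> 0) \<and> (\<forall>w. f w = (\<Prod>z\<in>Z. (w - z) ^ n z) * q w)"
  using assms
proof (induction Z arbitrary: f w0 rule: finite_induct)
  case empty
  then show ?case by (intro exI[of _ "\<lambda>_. 0"] exI[of _ f]) auto
next
  case (insert z Z)
  obtain k g where k: "g holomorphic_on UNIV" "\<And>w. g w = 0 \<Longrightarrow> w \<in> Z" "g z \<noteq> 0"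
    and fg: "\<And>w. f w = (w - z) ^ k * g w"
  proof (cases "f z = 0")
    case True
    then obtain k g where "g holomorphic_on UNIV" "g z \<noteq> 0" "\<And>w. f w = (w - z) ^ k * g w"
      using entire_factor_out_zero[OF insert.prems(1) _ insert.prems(3)] by metis
    moreover have "w \<in> Z" if "g w = 0" for w
      using that insert.prems(2)[of w] calculation by fastforce
    ultimately show thesis using that by blast
  next
    case False
    then show thesis using that[of f 0] insert.prems by auto
  qed
  obtain n q where "q holomorphic_on UNIV" "\<forall>w. q w \<noteq> 0" "\<forall>w. g w = (\<Prod>z\<in>Z. (w - z) ^ n z) * q w"
    using insert.IH[OF k(1,2,3)] by blast
  moreover have "(\<Prod>z'\<in>Z. (w - z') ^ (n(z := k)) z') = (\<Prod>z'\<in>Z. (w - z') ^ n z')" for w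
    using insert.hyps(2) by (intro prod.cong) auto
  ultimately show ?case
    by (intro exI[of _ "n(z := k)"] exI[of _ q]) (use fg insert.hyps in auto)
qed

lemma one_le_norm_diff_if_far:
  fixes w z :: complex
  assumes "finite Z" "z \<in> Z" "1 + (\<Sum>z\<in>Z. norm z) \<le> norm w"
  shows "1 \<le> norm (w - z)"
  using member_le_sum[of z Z norm] norm_triangle_ineq2[of w z] assms by auto

lemma one_le_norm_prod_power:
  fixes w :: complex
  assumes "\<And>z. z \<in> Z \<Longrightarrow> 1 \<le> norm (w - z)"
  shows "1 \<le> norm (\<Prod>z\<in>Z. (w - z) ^ n z)"
  unfolding prod_norm[symmetric] norm_power using assms by (intro prod_ge_1 one_le_power) auto

lemma norm_diff_le_norm_prod_power:
  fixes w \<beta> :: complex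
  assumes Z: "finite Z" "\<beta> \<in> Z" and n: "n \<beta> > 0" and far: "\<And>z. z \<in> Z \<Longrightarrow> 1 \<le> norm (w - z)"
  shows "norm (w - \<beta>) \<le> norm (\<Prod>z\<in>Z. (w - z) ^ n z)"
proof -
  have "norm (w - \<beta>) \<le> norm (w - \<beta>) ^ n \<beta>"
    using power_increasing[of 1 "n \<beta>" "norm (w - \<beta>)"] far[OF Z(2)] n by simp
  also have "\<dots> \<le> norm (w - \<beta>) ^ n \<beta> * norm (\<Prod>z\<in>Z - {\<beta>}. (w - z) ^ n z)"
    using one_le_norm_prod_power[of "Z - {\<beta>}" w n] far by (intro mult_le_cancel_left1[THEN iffD2]) auto
  also have "\<dots> = norm (\<Prod>z\<in>Z. (w - z) ^ n z)"
    using Z by (simp add: prod.remove norm_mult norm_power)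
  finally show ?thesis .
qed

lemma entire_exponential_type_finite_zeros:
  fixes G :: "complex \<Rightarrow> complex"
  assumes hol: "G holomorphic_on UNIV" and Z: "finite Z" "\<And>w. G w = 0 \<Longrightarrow> w \<in> Z"
    and w0: "G w0 \<noteq> 0" and growth: "\<And>w. norm (G w) \<le> C * exp (A * norm w)" and A: "A \<ge> 0"
  obtains n a b where "\<And>w. G w = (\<Prod>z\<in>Z. (w - z) ^ n z) * exp (a * w + b)"
proof -
  obtain n q where q: "q holomorphic_on UNIV" "\<And>w. q w \<noteq> 0"
    and Gq: "\<And>w. G w = (\<Prod>z\<in>Z. (w - z) ^ n z) * q w"
    using entire_factor_finite_zeros[OF Z(1) hol Z(2) w0] by blast
  obtain h where h: "h holomorphic_on UNIV" "\<And>w. exp (h w) = q w"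
    using holomorphic_logarithm_exists[of UNIV q 0] q by auto
  define \<rho> where "\<rho> = 1 + (\<Sum>z\<in>Z. norm z)"
  define C' where "C' = \<bar>C\<bar> + 1"
  have C': "C' > 0" unfolding C'_def by simp
  have Re_h_far: "Re (h w) \<le> A * norm w + ln C'" if "\<rho> \<le> norm w" for w
  proof -
    have "1 \<le> norm (\<Prod>z\<in>Z. (w - z) ^ n z)"
      using one_le_norm_diff_if_far[OF Z(1) _ that[unfolded \<rho>_def]]
      by (intro one_le_norm_prod_power) auto
    then have "exp (Re (h w)) \<le> norm (G w)"
      unfolding Gq norm_mult h(2)[symmetric] norm_exp_eq_Re by (simp add: mult_le_cancel_right1)
    also have "\<dots> \<le> C' * exp (A * norm w)"
    proof -
      have "C * exp (A * norm w) \<le> \<bar>C\<bar> * exp (A * norm w)" by (intro mult_right_mono) auto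
      then show ?thesis
        using growth[of w] exp_gt_zero[of "A * norm w"] unfolding C'_def distrib_right by linarith
    qed
    also have "\<dots> = exp (A * norm w + ln C')" using C' by (simp add: exp_add)
    finally show ?thesis by simp
  qed
  have "compact ((\<lambda>w. Re (h w)) ` cball 0 \<rho>)"
    using h(1) by (intro compact_continuous_image continuous_intros holomorphic_on_imp_continuous_on)
      (auto intro: holomorphic_on_subset)
  then obtain B0 where B0: "\<And>w. w \<in> cball 0 \<rho> \<Longrightarrow> Re (h w) \<le> B0"
    using bounded_imp_bdd_above[OF compact_imp_bounded] unfolding bdd_above_def by fastforce
  have "Re (h w) \<le> A * norm w + (\<bar>B0\<bar> + \<bar>ln C'\<bar>)" for w
    using Re_h_far[of w] B0[of w] mult_nonneg_nonneg[OF A norm_ge_zero[of w]] by force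
  then obtain a b where "\<And>w. h w = a * w + b"
    using entire_affine_if_Re_le_linear[OF h(1) _ A] by blast
  then show thesis using that[of n a b] Gq h(2) by metis
qed

lemma prod_power_exp_unbounded_on_imaginary_axis:
  fixes a b \<beta> :: complex
  assumes Z: "finite Z" "\<beta> \<in> Z" and n: "n \<beta> > 0"
  obtains t :: real where "K < norm ((\<Prod>z\<in>Z. (of_real t * \<i> - z) ^ n z) * exp (a * (of_real t * \<i>) + b))"
proof -
  define T where "T = 1 + (\<Sum>z\<in>Z. norm z) + norm \<beta> + \<bar>K\<bar> / exp (Re b)"
  \<comment> \<open>The sign of \<open>t\<close> is chosen so that \<open>exp (a t i)\<close> does not decay.\<close>
  define t where "t = (if Im a \<ge> 0 then - T else T)"
  define w where "w = of_real t * \<i>"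
  have T0: "T \<ge> 0" unfolding T_def by (simp add: sum_nonneg add_nonneg_nonneg)
  have nw: "norm w = T" unfolding w_def t_def using T0 by (simp add: norm_mult)
  have "0 \<le> (\<Sum>z\<in>Z. norm z)" by (simp add: sum_nonneg)
  then have "\<bar>K\<bar> / exp (Re b) < norm (w - \<beta>)"
    using norm_triangle_ineq2[of w \<beta>] nw unfolding T_def by linarith
  also have "\<dots> \<le> norm (\<Prod>z\<in>Z. (w - z) ^ n z)"
  proof (rule norm_diff_le_norm_prod_power[of Z \<beta> n w, OF Z n])
    show "1 \<le> norm (w - z)" if "z \<in> Z" for z
      using one_le_norm_diff_if_far[OF Z(1) that, of w] nw unfolding T_def by simp
  qed
  finally have "\<bar>K\<bar> < norm (\<Prod>z\<in>Z. (w - z) ^ n z) * exp (Re b)"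
    by (simp add: divide_less_eq)
  also have "\<dots> \<le> norm (\<Prod>z\<in>Z. (w - z) ^ n z) * norm (exp (a * w + b))"
    using T0 unfolding norm_exp_eq_Re w_def t_def
    by (intro mult_left_mono) (auto simp: mult_nonneg_nonpos mult_nonpos_nonneg)
  finally show thesis
    using that[of t] unfolding w_def by (simp add: norm_mult)
qed

lemma infinite_zeros_if_exponential_type_bounded_on_imaginary_axis:
  fixes G :: "complex \<Rightarrow> complex"
  assumes hol: "G holomorphic_on UNIV" and zero: "G \<beta> = 0"
    and growth: "\<And>w. norm (G w) \<le> C * exp (A * norm w)" and A: "A \<ge> 0"
    and axis: "\<And>t::real. norm (G (of_real t * \<i>)) \<le> K"
  shows "infinite {w. G w = 0}"
proof
  define Z where "Z = {w. G w = 0}"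
  assume fin: "finite {w. G w = 0}"
  then obtain w0 where w0: "G w0 \<noteq> 0"
    using infinite_UNIV_char_0 by (metis (mono_tags) UNIV_eq_I mem_Collect_eq)
  then obtain n a b where G: "\<And>w. G w = (\<Prod>z\<in>Z. (w - z) ^ n z) * exp (a * w + b)"
    using entire_exponential_type_finite_zeros[OF hol _ _ w0 growth A] fin unfolding Z_def by blast
  have "(\<Prod>z\<in>Z. (\<beta> - z) ^ n z) = 0" using G[of \<beta>] zero by simp
  then have "n \<beta> > 0" using fin unfolding Z_def by (auto simp: prod_zero_iff)
  then obtain t :: real where "K < norm (G (of_real t * \<i>))"
    unfolding G using prod_power_exp_unbounded_on_imaginary_axis[of Z \<beta> n K a b] fin zero
    unfolding Z_def by blast
  then show False using axis[of t] by simp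
qed

lemma norm_exp_minus_one_minus_le:
  fixes z :: complex
  shows "norm (exp z - 1 - z) \<le> (norm z)\<^sup>2 * exp (norm z)"
proof -
  have term_le: "norm z ^ k / fact (k + 2) \<le> norm z ^ k / fact k" for k
    by (intro divide_left_mono fact_mono) auto
  have exp_sums: "(\<lambda>k. norm z ^ k / fact k) sums exp (norm z)"
    using exp_converges[of "norm z"] by (simp add: divide_simps)
  have summ: "summable (\<lambda>k. norm z ^ k / fact (k + 2))"
    using term_le by (intro summable_comparison_test'[OF sums_summable[OF exp_sums]]) simp
  have "(\<lambda>k. z ^ (k + 2) /\<^sub>R fact (k + 2)) sums (exp z - (\<Sum>k<2. z ^ k /\<^sub>R fact k))"
    by (intro sums_split_initial_segment exp_converges)
  then have "exp z - 1 - z = (\<Sum>k. z ^ (k + 2) / fact (k + 2))"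
    by (simp add: sums_iff scaleR_conv_of_real divide_simps eval_nat_numeral)
  also have "norm \<dots> \<le> (\<Sum>k. norm (z ^ (k + 2) / fact (k + 2)))"
    using summable_norm_exp[of z]
    by (intro summable_norm summable_ignore_initial_segment)
       (auto simp: norm_power norm_divide divide_simps)
  also have "\<dots> = (\<Sum>k. (norm z)\<^sup>2 * (norm z ^ k / fact (k + 2)))"
    by (simp add: power_add norm_power norm_divide mult_ac norm_mult power2_eq_square del: of_nat_Suc)
  also have "\<dots> = (norm z)\<^sup>2 * (\<Sum>k. norm z ^ k / fact (k + 2))"
    using summ by (rule suminf_mult)
  also have "\<dots> \<le> (norm z)\<^sup>2 * exp (norm z)"
    by (intro mult_left_mono sums_le[OF term_le summable_sums[OF summ] exp_sums]) simp
  finally show ?thesis .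
qed

definition complex_mgf :: "'a measure \<Rightarrow> ('a \<Rightarrow> real) \<Rightarrow> complex \<Rightarrow> complex" where
  "complex_mgf M l \<alpha> = (\<integral>y. exp (\<alpha> * of_real (l y)) \<partial>M)"

context finite_measure
begin

lemma norm_integral_le_const_measure:
  fixes f :: "'a \<Rightarrow> 'b::{banach, second_countable_topology}"
  assumes "integrable M f" "AE y in M. norm (f y) \<le> B"
  shows "norm (integral\<^sup>L M f) \<le> B * measure M (space M)"
proof -
  have "norm (integral\<^sup>L M f) \<le> (\<integral>y. norm (f y) \<partial>M)" by (rule integral_norm_bound)
  also have "\<dots> \<le> (\<integral>y. B \<partial>M)" by (rule integral_mono_AE) (use assms in auto)
  finally show ?thesis by (simp add: mult.commute)
qed

context
  fixes l :: "'a \<Rightarrow> real" and C :: real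
  assumes l_measurable [measurable]: "l \<in> borel_measurable M"
    and l_bounded: "AE y in M. \<bar>l y\<bar> \<le> C"
begin

lemma AE_norm_exp_mult_le: "AE y in M. norm (exp (\<alpha> * of_real (l y))) \<le> exp (\<bar>Re \<alpha>\<bar> * C)"
  using l_bounded
proof eventually_elim
  case (elim y)
  have "Re \<alpha> * l y \<le> \<bar>Re \<alpha>\<bar> * \<bar>l y\<bar>" by (metis abs_ge_self abs_mult)
  also have "\<dots> \<le> \<bar>Re \<alpha>\<bar> * C" using elim by (intro mult_left_mono) auto
  finally show ?case by (simp add: norm_exp_eq_Re)
qed

lemma integrable_exp_mult: "integrable M (\<lambda>y. exp ((\<alpha> :: complex) * of_real (l y)))"
  by (rule integrable_const_bound[OF AE_norm_exp_mult_le]) measurable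

lemma norm_complex_mgf_le: "norm (complex_mgf M l \<alpha>) \<le> exp (\<bar>Re \<alpha>\<bar> * C) * measure M (space M)"
  unfolding complex_mgf_def by (rule norm_integral_le_const_measure[OF integrable_exp_mult AE_norm_exp_mult_le])

lemma complex_mgf_has_field_derivative:
  "(complex_mgf M l has_field_derivative (\<integral>y. of_real (l y) * exp (\<alpha> * of_real (l y)) \<partial>M)) (at \<alpha>)"
proof -
  define E where "E a y = exp (a * of_real (l y))" for a :: complex and y
  define D where "D = (\<integral>y. of_real (l y) * E \<alpha> y \<partial>M)"
  define K where "K = exp (\<bar>Re \<alpha>\<bar> * C) * C\<^sup>2 * exp \<bar>C\<bar>"
  define V where "V = measure M (space M)"
  have intE: "integrable M (E a)" for a unfolding E_def by (rule integrable_exp_mult)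
  have E_le: "AE y in M. norm (E \<alpha> y) \<le> exp (\<bar>Re \<alpha>\<bar> * C)"
    unfolding E_def by (rule AE_norm_exp_mult_le)
  have intD: "integrable M (\<lambda>y. of_real (l y) * E \<alpha> y)"
  proof (rule integrable_const_bound)
    show "AE y in M. norm (of_real (l y) * E \<alpha> y) \<le> C * exp (\<bar>Re \<alpha>\<bar> * C)"
      using l_bounded E_le by eventually_elim (simp add: norm_mult mult_mono)
  qed (unfold E_def, measurable)
  have quotient_error: "norm ((complex_mgf M l (\<alpha> + h) - complex_mgf M l \<alpha>) / h - D) \<le> K * V * norm h"
    if h: "h \<noteq> 0" "norm h \<le> 1" for h
  proof -
    define Q where "Q y = (E (\<alpha> + h) y - E \<alpha> y) / h - of_real (l y) * E \<alpha> y" for y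
    have "(complex_mgf M l (\<alpha> + h) - complex_mgf M l \<alpha>) / h - D = integral\<^sup>L M Q"
      unfolding Q_def D_def complex_mgf_def E_def[symmetric] using intE intD
      by (simp add: integral_divide_zero)
    also have "norm \<dots> \<le> K * norm h * measure M (space M)"
    proof (rule norm_integral_le_const_measure)
      show "integrable M Q" unfolding Q_def using intE intD by auto
      show "AE y in M. norm (Q y) \<le> K * norm h"
        using l_bounded E_le
      proof eventually_elim
        case (elim y)
        define w where "w = h * of_real (l y)"
        have nw: "norm w \<le> norm h * \<bar>C\<bar>" unfolding w_def using elim by (simp add: norm_mult mult_left_mono)
        have "norm h * \<bar>C\<bar> \<le> \<bar>C\<bar>" using mult_right_mono[OF h(2), of "\<bar>C\<bar>"] by simp
        have "norm (exp w - 1 - w) \<le> (norm w)\<^sup>2 * exp (norm w)"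
          by (rule norm_exp_minus_one_minus_le)
        also have "\<dots> \<le> (norm h * \<bar>C\<bar>)\<^sup>2 * exp \<bar>C\<bar>"
          using nw \<open>norm h * \<bar>C\<bar> \<le> \<bar>C\<bar>\<close> by (intro mult_mono power_mono) auto
        finally have "norm (exp w - 1 - w) \<le> (norm h * \<bar>C\<bar>)\<^sup>2 * exp \<bar>C\<bar>" .
        moreover have "Q y = E \<alpha> y * ((exp w - 1 - w) / h)"
          unfolding Q_def E_def w_def using h(1) by (simp add: field_simps exp_add distrib_right)
        ultimately have "norm (Q y) \<le> exp (\<bar>Re \<alpha>\<bar> * C) * ((norm h * \<bar>C\<bar>)\<^sup>2 * exp \<bar>C\<bar> / norm h)"
          using elim h(1) by (simp add: norm_mult norm_divide mult_mono divide_right_mono)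
        also have "\<dots> = exp (\<bar>Re \<alpha>\<bar> * C) * C\<^sup>2 * exp \<bar>C\<bar> * norm h"
          using h(1) by (simp add: power2_eq_square field_simps)
        finally show ?case unfolding K_def by simp
      qed
    qed
    finally show ?thesis unfolding V_def by (simp add: algebra_simps)
  qed
  have "((\<lambda>h. (complex_mgf M l (\<alpha> + h) - complex_mgf M l \<alpha>) / h - D) \<longlongrightarrow> 0) (at 0)"
  proof (rule Lim_null_comparison)
    show "\<forall>\<^sub>F h in at 0. norm ((complex_mgf M l (\<alpha> + h) - complex_mgf M l \<alpha>) / h - D) \<le> K * V * norm h"
      unfolding eventually_at using quotient_error by (intro exI[of _ 1]) (auto simp: dist_norm)
    show "((\<lambda>h. K * V * norm h) \<longlongrightarrow> 0) (at (0::complex))"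
      by (intro tendsto_eq_intros) auto
  qed
  then show ?thesis
    unfolding DERIV_def D_def E_def by (subst Lim_null)
qed

lemma holomorphic_complex_mgf: "complex_mgf M l holomorphic_on UNIV"
  using complex_mgf_has_field_derivative by (auto simp: holomorphic_on_open)

lemma infinite_complex_mgf_level_set: "infinite {\<alpha>. complex_mgf M l \<alpha> = complex_mgf M l \<beta>}"
proof -
  define c where "c = complex_mgf M l \<beta>"
  define V where "V = measure M (space M)"
  have V: "V \<ge> 0" unfolding V_def by simp
  have "norm (complex_mgf M l w - c) \<le> (V + norm c) * exp (\<bar>C\<bar> * norm w)" for w
  proof -
    have "\<bar>Re w\<bar> * C \<le> \<bar>Re w\<bar> * \<bar>C\<bar>" by (intro mult_left_mono) auto
    also have "\<dots> \<le> norm w * \<bar>C\<bar>" by (intro mult_right_mono abs_Re_le_cmod) simp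
    finally have "\<bar>Re w\<bar> * C \<le> \<bar>C\<bar> * norm w" by (simp add: mult.commute)
    then have "exp (\<bar>Re w\<bar> * C) * V \<le> exp (\<bar>C\<bar> * norm w) * V" using V by (intro mult_right_mono) auto
    moreover have "norm c \<le> norm c * exp (\<bar>C\<bar> * norm w)" by (simp add: mult_le_cancel_left1)
    ultimately show ?thesis
      using norm_triangle_ineq4[of "complex_mgf M l w" c] norm_complex_mgf_le[of w]
      unfolding V_def by (simp add: algebra_simps)
  qed
  moreover have "norm (complex_mgf M l (of_real t * \<i>) - c) \<le> V + norm c" for t :: real
    using norm_triangle_ineq4[of "complex_mgf M l (of_real t * \<i>)" c] norm_complex_mgf_le[of "of_real t * \<i>"]
    unfolding V_def by simp
  ultimately have "infinite {w. complex_mgf M l w - c = 0}"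
    using holomorphic_complex_mgf
    by (intro infinite_zeros_if_exponential_type_bounded_on_imaginary_axis[where \<beta> = \<beta>])
       (auto simp: c_def intro!: holomorphic_intros)
  then show ?thesis unfolding c_def by simp
qed

end

end


lemma sets_sphere_measure [measurable_cong]: "sets (sphere_measure R) = sets (borel :: 'a::euclidean_space measure)"
  by (simp add: sphere_measure_def)

lemma finite_measure_sphere_measure: "finite_measure (sphere_measure R :: 'a::euclidean_space measure)"
proof -
  define D where "D = ball (0::'a) R - {0}"
  have "emeasure lborel D \<le> emeasure lborel (ball (0::'a) R)"
    unfolding D_def by (intro emeasure_mono) auto
  then have "emeasure lborel D < \<infinity>"
    using emeasure_lborel_ball_finite le_less_trans by blast
  then have "finite_measure (restrict_space lborel D)"
    by (intro finite_measureI) (simp add: D_def emeasure_restrict_space space_restrict_space)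
  then have "finite_measure (distr (restrict_space lborel D) borel (\<lambda>y. (R / norm y) *\<^sub>R y))"
    by (rule finite_measure.finite_measure_distr) (intro measurable_restrict_space1, measurable)
  then show ?thesis
    unfolding sphere_measure_def D_def[symmetric]
    by (intro finite_measureI)
       (simp add: space_scale_measure finite_measure.emeasure_finite ennreal_mult_eq_top_iff)
qed

lemma AE_sphere_measure_norm_eq:
  assumes "R > 0"
  shows "AE y in sphere_measure R. norm y = (R :: real)"
proof (rule AE_I')
  define D where "D = ball (0::'a) R - {0}"
  define p where "p y = (R / norm y) *\<^sub>R y" for y :: 'a
  have p: "p \<in> restrict_space lborel D \<rightarrow>\<^sub>M borel"
    unfolding p_def by (intro measurable_restrict_space1) measurable
  have "p -` (- sphere 0 R) \<inter> space (restrict_space lborel D) = {}"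
    using assms by (auto simp: p_def D_def space_restrict_space split: if_splits)
  then have "emeasure (sphere_measure R) (- sphere (0::'a) R) = 0"
    unfolding sphere_measure_def D_def[symmetric] p_def[symmetric] emeasure_scale_measure
    by (subst emeasure_distr[OF p]) auto
  then show "- sphere (0::'a) R \<in> null_sets (sphere_measure R)"
    by (intro null_setsI) (simp_all add: sets_sphere_measure borel_comp borel_closed)
qed auto

lemma omega_bounds_on_sphere:
  fixes x z :: "'a::euclidean_space"
  assumes x: "norm x \<noteq> R" and z: "norm z = R"
  shows "\<bar>(norm x)\<^sup>2 - R\<^sup>2\<bar> / (norm x + R)\<^sup>2 \<le> omega x z"
    and "omega x z \<le> \<bar>(norm x)\<^sup>2 - R\<^sup>2\<bar> / (norm x - R)\<^sup>2"
proof -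
  have "R \<ge> 0" using z by auto
  then have num: "0 < \<bar>(norm x)\<^sup>2 - R\<^sup>2\<bar>" using x by (simp add: power2_eq_iff_nonneg)
  have "(norm x - R)\<^sup>2 \<le> (norm (x - z))\<^sup>2"
    using norm_triangle_ineq3[of x z] z by (metis abs_ge_zero power2_abs power_mono)
  moreover have "(norm (x - z))\<^sup>2 \<le> (norm x + R)\<^sup>2"
    using norm_triangle_ineq4[of x z] z by (simp add: power_mono)
  moreover have "0 < (norm x - R)\<^sup>2" using x by simp
  moreover have "omega x z = \<bar>(norm x)\<^sup>2 - R\<^sup>2\<bar> / (norm (x - z))\<^sup>2"
    unfolding omega_def using z by (simp add: abs_divide)
  ultimately show "\<bar>(norm x)\<^sup>2 - R\<^sup>2\<bar> / (norm x + R)\<^sup>2 \<le> omega x z"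
    and "omega x z \<le> \<bar>(norm x)\<^sup>2 - R\<^sup>2\<bar> / (norm x - R)\<^sup>2"
    using num by (auto intro!: divide_left_mono mult_pos_pos)
qed

lemma ln_omega_bounded_on_sphere:
  fixes x :: "'a::euclidean_space"
  assumes "norm x \<noteq> R" "R \<ge> 0"
  obtains C where "\<And>z. norm z = R \<Longrightarrow> \<bar>ln (omega x z)\<bar> \<le> C"
proof
  define lo where "lo = \<bar>(norm x)\<^sup>2 - R\<^sup>2\<bar> / (norm x + R)\<^sup>2"
  define hi where "hi = \<bar>(norm x)\<^sup>2 - R\<^sup>2\<bar> / (norm x - R)\<^sup>2"
  have "0 < \<bar>(norm x)\<^sup>2 - R\<^sup>2\<bar>" using assms by (simp add: power2_eq_iff_nonneg)
  moreover have "0 < norm x + R" using assms by (cases "R = 0") (auto intro: add_nonneg_pos)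
  ultimately have "lo > 0" unfolding lo_def by simp
  fix z :: 'a assume "norm z = R"
  with omega_bounds_on_sphere[OF assms(1) this] \<open>lo > 0\<close> 
  have "ln lo \<le> ln (omega x z)" "ln (omega x z) \<le> ln hi"
    unfolding lo_def[symmetric] hi_def[symmetric] by auto
  then show "\<bar>ln (omega x z)\<bar> \<le> max \<bar>ln lo\<bar> \<bar>ln hi\<bar>" by linarith
qed

theorem theorem1:
  fixes x :: "'a::euclidean_space" and R :: real and \<beta> :: complex
  assumes "R > 0" and "norm x \<noteq> R"
  shows "infinite {\<alpha> :: complex.
           (\<integral>y. cpow_pos (omega x y) \<alpha> \<partial>sphere_measure R)
         = (\<integral>y. cpow_pos (omega x y) \<beta> \<partial>sphere_measure R)}"
proof -
  obtain C where C: "\<And>y. norm y = R \<Longrightarrow> \<bar>ln (omega x y)\<bar> \<le> C"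
    using ln_omega_bounded_on_sphere assms by (metis less_imp_le)
  have "AE y in sphere_measure R. \<bar>ln (omega x y)\<bar> \<le> C"
    using AE_sphere_measure_norm_eq[OF assms(1)] by eventually_elim (rule C)
  moreover have "(\<lambda>y. ln (omega x y)) \<in> borel_measurable (sphere_measure R)"
    unfolding omega_def by measurable
  ultimately show ?thesis
    using finite_measure.infinite_complex_mgf_level_set[OF finite_measure_sphere_measure]
    unfolding complex_mgf_def cpow_pos_def by blast
qed

end
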